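(* For every $n\in\mathbb{N}$, the boolean quadric polytope $\mathrm{BQP}(n)$ is affinely equivalent to some face of the linear ordering polytope $\mathrm{LOP}(2n)$.
   Context: The boolean quadric polytope $\mathrm{BQP}(n)$ is the convex hull of all vectors $\mathbf{x}=(x_{ij})_{1\le i\le j\le n}\in\{0,1\}^{n(n+1)/2}$ satisfying $x_{ij}=x_{ii}x_{jj}$ for all $1\le i<j\le n$. For $m\in\mathbb{N}$, a linear order on $[m]=\{1,\dots,m\}$ is a set $L$ of ordered pairs $(i,j)$, $i\neq j$, such that for each pair $i\neq j$ exactly one of $(i,j),(j,i)$ lies in $L$, and $L$ is transitive ($(i,j),(j,k)\in L\Rightarrow (i,k)\in L$). Its characteristic vector $\mathbf{y}\in\{0,1\}^{m(m-1)/2}$ has coordinates $y_{ij}$, $1\le i<j\le m$, with $y_{ij}=1$ if $(i,j)\in L$ and $y_{ij}=0$ if $(j,i)\in L$. The linear ordering polytope $\mathrm{LOP}(m)$ is the convex hull of all such characteristic vectors. A hyperplane $H$ is supporting for a polytope $P$ if $P\cap H\neq\emptyset$ and $P$ lies entirely on one side of $H$; a face of $P$ is the intersection of $P$ with one or several supporting hyperplanes. Two polytopes $P,Q$ are affinely equivalent if there is an invertible affine map $\alpha$ with $\alpha(P)=Q$ (equivalently, an affine bijection between them). *)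

theory Defs
  imports Complex_Main
begin

(* Vectors with coordinates indexed by a finite set I of pairs of naturals are
   represented as functions  nat \<times> nat \<Rightarrow> real  that vanish outside I. *)

type_synonym vect = "nat \<times> nat \<Rightarrow> real"

definition bqp_idx :: "nat \<Rightarrow> (nat \<times> nat) set" where
  "bqp_idx n = {(i, j). 1 \<le> i \<and> i \<le> j \<and> j \<le> n}"

definition lop_idx :: "nat \<Rightarrow> (nat \<times> nat) set" where
  "lop_idx m = {(i, j). 1 \<le> i \<and> i < j \<and> j \<le> m}"

definition conv_hull_fin :: "vect set \<Rightarrow> vect set" where
  "conv_hull_fin S = {x. \<exists>c. (\<forall>v\<in>S. 0 \<le> c v) \<and> sum c S = 1 \<and>
                          x = (\<lambda>k. \<Sum>v\<in>S. c v * v k)}"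

definition bqp_vertices :: "nat \<Rightarrow> vect set" where
  "bqp_vertices n = {x. (\<forall>k. k \<notin> bqp_idx n \<longrightarrow> x k = 0) \<and>
                        (\<forall>k\<in>bqp_idx n. x k \<in> {0, 1}) \<and>
                        (\<forall>i j. 1 \<le> i \<longrightarrow> i < j \<longrightarrow> j \<le> n \<longrightarrow> x (i, j) = x (i, i) * x (j, j))}"

definition BQP :: "nat \<Rightarrow> vect set" where
  "BQP n = conv_hull_fin (bqp_vertices n)"

definition lin_order :: "nat \<Rightarrow> (nat \<times> nat) set \<Rightarrow> bool" where
  "lin_order m L \<longleftrightarrow> L \<subseteq> {1..m} \<times> {1..m} \<and> (\<forall>(i, j)\<in>L. i \<noteq> j) \<and>
     (\<forall>i\<in>{1..m}. \<forall>j\<in>{1..m}. i \<noteq> j \<longrightarrow> ((i, j) \<in> L \<longleftrightarrow> (j, i) \<notin> L)) \<and>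
     trans L"

definition char_vec :: "nat \<Rightarrow> (nat \<times> nat) set \<Rightarrow> vect" where
  "char_vec m L = (\<lambda>k. if k \<in> lop_idx m \<and> k \<in> L then 1 else 0)"

definition lop_vertices :: "nat \<Rightarrow> vect set" where
  "lop_vertices m = char_vec m ` {L. lin_order m L}"

definition LOP :: "nat \<Rightarrow> vect set" where
  "LOP m = conv_hull_fin (lop_vertices m)"

definition hyperplane_on :: "(nat \<times> nat) set \<Rightarrow> vect \<Rightarrow> real \<Rightarrow> vect set" where
  "hyperplane_on I a b = {x. (\<Sum>k\<in>I. a k * x k) = b}"

definition supporting_on :: "(nat \<times> nat) set \<Rightarrow> vect set \<Rightarrow> vect \<Rightarrow> real \<Rightarrow> bool" where
  "supporting_on I P a b \<longleftrightarrow> P \<inter> hyperplane_on I a b \<noteq> {} \<and>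
     ((\<forall>x\<in>P. (\<Sum>k\<in>I. a k * x k) \<le> b) \<or> (\<forall>x\<in>P. (\<Sum>k\<in>I. a k * x k) \<ge> b))"

definition is_face_on :: "(nat \<times> nat) set \<Rightarrow> vect set \<Rightarrow> vect set \<Rightarrow> bool" where
  "is_face_on I P F \<longleftrightarrow> (\<exists>Hs. finite Hs \<and> Hs \<noteq> {} \<and>
      (\<forall>(a, b)\<in>Hs. supporting_on I P a b) \<and>
      F = P \<inter> (\<Inter>(a, b)\<in>Hs. hyperplane_on I a b))"

definition aff_equiv_on :: "(nat \<times> nat) set \<Rightarrow> vect set \<Rightarrow> vect set \<Rightarrow> bool" where
  "aff_equiv_on I P Q \<longleftrightarrow> (\<exists>(A :: nat \<times> nat \<Rightarrow> nat \<times> nat \<Rightarrow> real) (c :: vect).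
      bij_betw (\<lambda>x. \<lambda>k. (\<Sum>l\<in>I. A k l * x l) + c k) P Q)"

end

(*
  Write u_i = i and w_i = n + i for the elements of [2n].  The linear orders L that put u_i before
  w_j and order the triples (u_i, u_j, w_i) and (u_j, w_i, w_j) cyclically, for all i < j, are
  exactly the vertices of LOP(2n) on which a family of valid inequalities of LOP(2n) (the bounds
  y(u_i, w_j) <= 1 and 3-dicycle inequalities) is tight, so they span a face F.  Such an order is
  determined by the set S of indices with u_i before w_i, and every S arises.  The pairs it orders
  are then determined by S alone, and its characteristic vector is an affine function of the BQP
  vertex x_ij = [i \<in> S \<and> j \<in> S].  This affine map is injective on the coordinate space of BQP(n)
  and sends the vertices of BQP(n) onto those of F; affine maps commute with convex hulls.
*)

theory Submission
  imports Defs
begin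

section \<open>Convex hulls of finite point sets\<close>


definition inner_on :: "(nat \<times> nat) set \<Rightarrow> vect \<Rightarrow> vect \<Rightarrow> real" where
  "inner_on I a y = (\<Sum>k\<in>I. a k * y k)"

definition affine_map :: "(nat \<times> nat) set \<Rightarrow> (nat \<times> nat \<Rightarrow> vect) \<Rightarrow> vect \<Rightarrow> vect \<Rightarrow> vect" where
  "affine_map I A c x = (\<lambda>k. inner_on I (A k) x + c k)"

definition unit_vec :: "nat \<times> nat \<Rightarrow> vect" where
  "unit_vec p = (\<lambda>k. if k = p then 1 else 0)"

lemma hyperplane_on_iff: "x \<in> hyperplane_on I a b \<longleftrightarrow> inner_on I a x = b"
  unfolding hyperplane_on_def inner_on_def by simp

lemma inner_on_zero [simp]: "inner_on I (\<lambda>_. 0) y = 0"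
  unfolding inner_on_def by simp

lemma inner_on_add [simp]: "inner_on I (\<lambda>k. a k + b k) y = inner_on I a y + inner_on I b y"
  unfolding inner_on_def by (simp add: distrib_right sum.distrib)

lemma inner_on_diff [simp]: "inner_on I (\<lambda>k. a k - b k) y = inner_on I a y - inner_on I b y"
  unfolding inner_on_def by (simp add: left_diff_distrib sum_subtractf)

lemma inner_on_unit_vec [simp]:
  assumes "finite I" "p \<in> I"
  shows "inner_on I (unit_vec p) y = y p"
proof -
  have "(\<Sum>k\<in>I. (if k = p then 1 else 0) * y k) = (\<Sum>k\<in>I. if k = p then y p else 0)"
    by (intro sum.cong) auto
  then show ?thesis using \<open>finite I\<close> \<open>p \<in> I\<close> unfolding inner_on_def unit_vec_def by simp
qed

lemma inner_on_convex_comb: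
  "inner_on I a (\<lambda>k. \<Sum>v\<in>V. c v * g v k) = (\<Sum>v\<in>V. c v * inner_on I a (g v))"
proof -
  have "(\<Sum>k\<in>I. a k * (\<Sum>v\<in>V. c v * g v k)) = (\<Sum>k\<in>I. \<Sum>v\<in>V. c v * (a k * g v k))"
    by (simp add: sum_distrib_left mult.left_commute)
  also have "\<dots> = (\<Sum>v\<in>V. c v * (\<Sum>k\<in>I. a k * g v k))"
    by (subst sum.swap) (simp add: sum_distrib_left)
  finally show ?thesis unfolding inner_on_def .
qed

lemma affine_map_convex_comb:
  assumes "sum c V = 1"
  shows "affine_map I A c0 (\<lambda>k. \<Sum>v\<in>V. c v * v k) = (\<lambda>k. \<Sum>v\<in>V. c v * affine_map I A c0 v k)"
proof
  fix k
  have "c0 k = (\<Sum>v\<in>V. c v * c0 k)" using assms by (simp add: sum_distrib_right[symmetric])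
  then show "affine_map I A c0 (\<lambda>k. \<Sum>v\<in>V. c v * v k) k = (\<Sum>v\<in>V. c v * affine_map I A c0 v k)"
    unfolding affine_map_def inner_on_convex_comb[where g = id, simplified]
    by (simp add: distrib_left sum.distrib)
qed

lemma convex_comb_in_conv_hull_fin:
  assumes "finite V" "finite W" "g ` V \<subseteq> W" "\<forall>v\<in>V. 0 \<le> c v" "sum c V = 1"
  shows "(\<lambda>k. \<Sum>v\<in>V. c v * g v k) \<in> conv_hull_fin W"
  unfolding conv_hull_fin_def
proof (intro CollectI exI[of _ "\<lambda>w. \<Sum>v\<in>{v\<in>V. g v = w}. c v"] conjI ballI)
  fix w show "0 \<le> (\<Sum>v\<in>{v\<in>V. g v = w}. c v)"
    using assms(4) by (auto intro: sum_nonneg)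
next
  show "(\<Sum>w\<in>W. \<Sum>v\<in>{v\<in>V. g v = w}. c v) = 1"
    using sum.group[OF assms(1-3), of c] assms(5) by simp
next
  have "(\<Sum>w\<in>W. (\<Sum>v\<in>{v\<in>V. g v = w}. c v) * w k) = (\<Sum>v\<in>V. c v * g v k)" for k
  proof -
    have "(\<Sum>w\<in>W. (\<Sum>v\<in>{v\<in>V. g v = w}. c v) * w k) = (\<Sum>w\<in>W. \<Sum>v\<in>{v\<in>V. g v = w}. c v * g v k)"
      by (intro sum.cong refl) (auto simp: sum_distrib_right)
    also have "\<dots> = (\<Sum>v\<in>V. c v * g v k)"
      using sum.group[OF assms(1-3), of "\<lambda>v. c v * g v k"] by simp
    finally show ?thesis .
  qed
  then show "(\<lambda>k. \<Sum>v\<in>V. c v * g v k) = (\<lambda>k. \<Sum>w\<in>W. (\<Sum>v\<in>{v\<in>V. g v = w}. c v) * w k)"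
    by simp
qed

lemma conv_hull_fin_mono:
  "finite W \<Longrightarrow> V \<subseteq> W \<Longrightarrow> conv_hull_fin V \<subseteq> conv_hull_fin W"
  using convex_comb_in_conv_hull_fin[of V W id] finite_subset
  unfolding conv_hull_fin_def by fastforce

lemma vertex_in_conv_hull_fin:
  assumes "finite W" "w \<in> W"
  shows "w \<in> conv_hull_fin W"
proof -
  have "(\<lambda>k. \<Sum>v\<in>{w}. 1 * v k) \<in> conv_hull_fin W"
    using assms by (intro convex_comb_in_conv_hull_fin) auto
  then show ?thesis by simp
qed

lemma conv_hull_fin_coord_zero:
  "x \<in> conv_hull_fin V \<Longrightarrow> \<forall>v\<in>V. v k = 0 \<Longrightarrow> x k = 0"
  unfolding conv_hull_fin_def by (auto intro: sum.neutral)

lemma conv_hull_fin_inner_le: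
  assumes "x \<in> conv_hull_fin W" "\<forall>w\<in>W. inner_on I a w \<le> b"
  shows "inner_on I a x \<le> b"
proof -
  obtain c where c: "\<forall>v\<in>W. 0 \<le> c v" "sum c W = 1" "x = (\<lambda>k. \<Sum>v\<in>W. c v * v k)"
    using assms(1) unfolding conv_hull_fin_def by blast
  have "inner_on I a x = (\<Sum>w\<in>W. c w * inner_on I a w)"
    using c(3) inner_on_convex_comb[of I a c id W] by simp
  also have "\<dots> \<le> (\<Sum>w\<in>W. c w * b)"
    using c(1) assms(2) by (intro sum_mono mult_left_mono) auto
  also have "\<dots> = b" using c(2) by (simp add: sum_distrib_right[symmetric])
  finally show ?thesis .
qed

lemma conv_hull_fin_inner_eq:
  assumes "x \<in> conv_hull_fin W" "\<forall>w\<in>W. inner_on I a w = b"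
  shows "inner_on I a x = b"
proof -
  obtain c where c: "sum c W = 1" "x = (\<lambda>k. \<Sum>v\<in>W. c v * v k)"
    using assms(1) unfolding conv_hull_fin_def by blast
  have "inner_on I a x = (\<Sum>w\<in>W. c w * inner_on I a w)"
    using c(2) inner_on_convex_comb[of I a c id W] by simp
  also have "\<dots> = (\<Sum>w\<in>W. c w * b)"
    using assms(2) by (intro sum.cong) auto
  also have "\<dots> = b" using c(1) by (simp add: sum_distrib_right[symmetric])
  finally show ?thesis .
qed

lemma tight_at_positive_weight:
  assumes "finite W" "\<forall>v\<in>W. 0 \<le> c v" "sum c W = 1" "\<forall>w\<in>W. inner_on I a w \<le> b"
    and "inner_on I a (\<lambda>k. \<Sum>v\<in>W. c v * v k) = b" "w \<in> W" "c w > 0"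
  shows "inner_on I a w = b"
proof -
  have "(\<Sum>v\<in>W. c v * (b - inner_on I a v)) = (\<Sum>v\<in>W. c v) * b - (\<Sum>v\<in>W. c v * inner_on I a v)"
    by (simp add: right_diff_distrib sum_subtractf sum_distrib_right)
  also have "\<dots> = 0"
    using assms(3,5) inner_on_convex_comb[of I a c id W] by simp
  finally have "\<forall>v\<in>W. c v * (b - inner_on I a v) = 0"
    using assms(1,2,4) by (subst sum_nonneg_eq_0_iff[symmetric]) auto
  then show ?thesis using assms(6,7) by auto
qed

lemma conv_hull_fin_tight_vertices:
  assumes W: "finite W" and valid: "\<forall>w\<in>W. \<forall>(a, b)\<in>H. inner_on I a w \<le> b"
    and y: "y \<in> conv_hull_fin W" "\<forall>(a, b)\<in>H. inner_on I a y = b"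
  shows "y \<in> conv_hull_fin {w\<in>W. \<forall>(a, b)\<in>H. inner_on I a w = b}" (is "_ \<in> conv_hull_fin ?T")
proof -
  obtain d where d: "\<forall>w\<in>W. 0 \<le> d w" "sum d W = 1" "y = (\<lambda>k. \<Sum>w\<in>W. d w * w k)"
    using y(1) unfolding conv_hull_fin_def by blast
  have "w \<in> ?T" if "w \<in> W" "d w > 0" for w
  proof -
    have "inner_on I a w = b" if "(a, b) \<in> H" for a b
    proof (rule tight_at_positive_weight[OF W d(1,2) _ _ \<open>w \<in> W\<close> \<open>d w > 0\<close>])
      show "\<forall>w\<in>W. inner_on I a w \<le> b" using valid that by blast
      show "inner_on I a (\<lambda>k. \<Sum>v\<in>W. d v * v k) = b" using y(2) d(3) that by auto
    qed
    with \<open>w \<in> W\<close> show ?thesis by blast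
  qed
  then have zero: "d w = 0" if "w \<in> W - ?T" for w
    using that d(1) by (meson DiffE not_less order.antisym)
  have restrict: "(\<Sum>w\<in>?T. d w * f w) = (\<Sum>w\<in>W. d w * f w)" for f :: "vect \<Rightarrow> real"
    using zero W by (intro sum.mono_neutral_left) simp_all
  have "(\<lambda>k. \<Sum>w\<in>?T. d w * id w k) \<in> conv_hull_fin ?T"
    using W restrict[of "\<lambda>_. 1"] d(1,2) by (intro convex_comb_in_conv_hull_fin) auto
  then show ?thesis using restrict d(3) by simp
qed

lemma conv_hull_fin_Int_hyperplanes:
  assumes W: "finite W" and valid: "\<forall>w\<in>W. \<forall>(a, b)\<in>H. inner_on I a w \<le> b"
  shows "conv_hull_fin W \<inter> (\<Inter>(a, b)\<in>H. hyperplane_on I a b)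
       = conv_hull_fin {w\<in>W. \<forall>(a, b)\<in>H. inner_on I a w = b}" (is "_ = conv_hull_fin ?T")
proof
  show "conv_hull_fin W \<inter> (\<Inter>(a, b)\<in>H. hyperplane_on I a b) \<subseteq> conv_hull_fin ?T"
  proof
    fix y assume "y \<in> conv_hull_fin W \<inter> (\<Inter>(a, b)\<in>H. hyperplane_on I a b)"
    then have "y \<in> conv_hull_fin W" "\<forall>(a, b)\<in>H. inner_on I a y = b"
      by (auto simp: hyperplane_on_iff)
    then show "y \<in> conv_hull_fin ?T" by (rule conv_hull_fin_tight_vertices[OF W valid])
  qed
  have "conv_hull_fin ?T \<subseteq> conv_hull_fin W" by (rule conv_hull_fin_mono[OF W]) blast
  moreover have "inner_on I a y = b" if "y \<in> conv_hull_fin ?T" "(a, b) \<in> H" for y a b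
    using that(2) by (intro conv_hull_fin_inner_eq[OF that(1)]) auto
  ultimately show "conv_hull_fin ?T \<subseteq> conv_hull_fin W \<inter> (\<Inter>(a, b)\<in>H. hyperplane_on I a b)"
    by (auto simp: hyperplane_on_iff)
qed

lemma is_face_on_Int_hyperplanes:
  assumes "finite W" "finite H" "H \<noteq> {}"
    and valid: "\<forall>w\<in>W. \<forall>(a, b)\<in>H. inner_on I a w \<le> b"
    and w0: "w0 \<in> W" "\<forall>(a, b)\<in>H. inner_on I a w0 = b"
  shows "is_face_on I (conv_hull_fin W) (conv_hull_fin W \<inter> (\<Inter>(a, b)\<in>H. hyperplane_on I a b))"
  unfolding is_face_on_def
proof (intro exI[of _ H] conjI ballI)
  fix h assume "h \<in> H"
  then obtain a b where h: "h = (a, b)" "(a, b) \<in> H" by (cases h) auto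
  have "w0 \<in> conv_hull_fin W \<inter> hyperplane_on I a b"
    using vertex_in_conv_hull_fin[OF assms(1) w0(1)] w0(2) h(2) by (auto simp: hyperplane_on_iff)
  then have meets: "conv_hull_fin W \<inter> hyperplane_on I a b \<noteq> {}" by blast
  have "inner_on I a x \<le> b" if "x \<in> conv_hull_fin W" for x
    using conv_hull_fin_inner_le[OF that] valid h(2) by blast
  then have below: "\<forall>x\<in>conv_hull_fin W. (\<Sum>k\<in>I. a k * x k) \<le> b"
    unfolding inner_on_def by blast
  show "case h of (a, b) \<Rightarrow> supporting_on I (conv_hull_fin W) a b"
    unfolding h supporting_on_def using meets below by simp
qed (simp_all add: assms(2,3))

lemma affine_map_conv_hull_fin:
  assumes V: "finite V" and inj: "inj_on (affine_map I A c) V"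
  shows "affine_map I A c ` conv_hull_fin V = conv_hull_fin (affine_map I A c ` V)"
    (is "?f ` _ = _")
proof
  show "?f ` conv_hull_fin V \<subseteq> conv_hull_fin (?f ` V)"
  proof
    fix y assume "y \<in> ?f ` conv_hull_fin V"
    then obtain c where c: "\<forall>v\<in>V. 0 \<le> c v" "sum c V = 1" "y = ?f (\<lambda>k. \<Sum>v\<in>V. c v * v k)"
      unfolding conv_hull_fin_def by blast
    have "(\<lambda>k. \<Sum>v\<in>V. c v * ?f v k) \<in> conv_hull_fin (?f ` V)"
      using V c(1,2) by (intro convex_comb_in_conv_hull_fin) auto
    then show "y \<in> conv_hull_fin (?f ` V)" unfolding c(3) affine_map_convex_comb[OF c(2)] .
  qed
  show "conv_hull_fin (?f ` V) \<subseteq> ?f ` conv_hull_fin V"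
  proof
    fix y assume "y \<in> conv_hull_fin (?f ` V)"
    then obtain d where d: "\<forall>w\<in>?f ` V. 0 \<le> d w" "sum d (?f ` V) = 1"
      "y = (\<lambda>k. \<Sum>w\<in>?f ` V. d w * w k)"
      unfolding conv_hull_fin_def by blast
    have reindex: "(\<Sum>v\<in>V. d (?f v) * g (?f v)) = (\<Sum>w\<in>?f ` V. d w * g w)" for g :: "vect \<Rightarrow> real"
      using sum.reindex[OF inj, of "\<lambda>w. d w * g w"] by simp
    define x where "x = (\<lambda>k. \<Sum>v\<in>V. d (?f v) * v k)"
    have sum1: "(\<Sum>v\<in>V. d (?f v)) = 1" using reindex[of "\<lambda>_. 1"] d(2) by simp
    have "\<forall>v\<in>V. 0 \<le> d (?f v)" using d(1) by blast
    then have "x \<in> conv_hull_fin V"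
      unfolding conv_hull_fin_def x_def using sum1 by (intro CollectI exI[of _ "\<lambda>v. d (?f v)"]) simp
    moreover have "?f x = y"
      unfolding x_def affine_map_convex_comb[OF sum1] d(3)
    proof
      show "(\<Sum>v\<in>V. d (?f v) * ?f v k) = (\<Sum>w\<in>?f ` V. d w * w k)" for k
        using reindex[of "\<lambda>w. w k"] .
    qed
    ultimately show "y \<in> ?f ` conv_hull_fin V" by blast
  qed
qed

section \<open>Index sets and linear orders\<close>

lemma finite_bqp_idx: "finite (bqp_idx n)"
  by (rule finite_subset[of _ "{1..n} \<times> {1..n}"]) (auto simp: bqp_idx_def)

lemma finite_lop_idx: "finite (lop_idx n)"
  by (rule finite_subset[of _ "{1..n} \<times> {1..n}"]) (auto simp: lop_idx_def)

lemma mem_bqp_idx [simp]: "(i, j) \<in> bqp_idx n \<longleftrightarrow> 1 \<le> i \<and> i \<le> j \<and> j \<le> n"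
  by (simp add: bqp_idx_def)

lemma mem_lop_idx [simp]: "(i, j) \<in> lop_idx n \<longleftrightarrow> 1 \<le> i \<and> i < j \<and> j \<le> n"
  by (simp add: lop_idx_def)

lemma lin_order_total:
  "lin_order m L \<Longrightarrow> x \<in> {1..m} \<Longrightarrow> y \<in> {1..m} \<Longrightarrow> x \<noteq> y \<Longrightarrow> (x, y) \<in> L \<longleftrightarrow> (y, x) \<notin> L"
  unfolding lin_order_def by blast

lemma lin_order_trans: "lin_order m L \<Longrightarrow> (x, y) \<in> L \<Longrightarrow> (y, z) \<in> L \<Longrightarrow> (x, z) \<in> L"
  unfolding lin_order_def trans_def by blast

lemma finite_lop_vertices: "finite (lop_vertices m)"
proof -
  have "{L. lin_order m L} \<subseteq> Pow ({1..m} \<times> {1..m})" unfolding lin_order_def by auto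
  then show ?thesis unfolding lop_vertices_def by (auto intro: finite_subset)
qed

lemma char_vec_apply:
  "char_vec m L (a, b) = (if 1 \<le> a \<and> a < b \<and> b \<le> m \<and> (a, b) \<in> L then 1 else 0)"
  by (simp add: char_vec_def)

definition cyclic :: "(nat \<times> nat) set \<Rightarrow> nat \<Rightarrow> nat \<Rightarrow> nat \<Rightarrow> bool" where
  "cyclic L a b c \<longleftrightarrow>
     ((a, b) \<in> L \<and> (b, c) \<in> L) \<or> ((b, c) \<in> L \<and> (c, a) \<in> L) \<or> ((c, a) \<in> L \<and> (a, b) \<in> L)"

definition face_order :: "nat \<Rightarrow> (nat \<times> nat) set \<Rightarrow> bool" where
  "face_order n L \<longleftrightarrow> (\<forall>i j. 1 \<le> i \<longrightarrow> i < j \<longrightarrow> j \<le> n \<longrightarrow>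
      (i, n + j) \<in> L \<and> cyclic L i j (n + i) \<and> cyclic L j (n + i) (n + j))"

lemma face_order_pairs:
  assumes L: "lin_order (2 * n) L" "face_order n L" and ij: "1 \<le> i" "i < j" "j \<le> n"
  shows "(i, j) \<in> L \<longleftrightarrow> (i, n + i) \<in> L \<or> (n + j, j) \<in> L"
    and "(n + i, n + j) \<in> L \<longleftrightarrow> (n + i, i) \<in> L \<or> (j, n + j) \<in> L"
    and "(n + i, j) \<in> L \<longleftrightarrow> (n + i, i) \<in> L \<and> (n + j, j) \<in> L"
proof -
  have tot: "(y, x) \<in> L \<longleftrightarrow> (x, y) \<notin> L"
    if "x \<in> {i, j, n + i, n + j}" "y \<in> {i, j, n + i, n + j}" "x \<noteq> y" for x y
    using lin_order_total[OF L(1), of y x] that ij by auto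
  note t = lin_order_trans[OF L(1)]
  have "(i, n + j) \<in> L" "cyclic L i j (n + i)" "cyclic L j (n + i) (n + j)"
    using L(2) ij unfolding face_order_def by auto
  moreover note tot[of i j] tot[of i "n + i"] tot[of i "n + j"] tot[of j "n + i"] tot[of j "n + j"]
    tot[of "n + i" "n + j"]
  ultimately show "(i, j) \<in> L \<longleftrightarrow> (i, n + i) \<in> L \<or> (n + j, j) \<in> L"
    and "(n + i, n + j) \<in> L \<longleftrightarrow> (n + i, i) \<in> L \<or> (j, n + j) \<in> L"
    and "(n + i, j) \<in> L \<longleftrightarrow> (n + i, i) \<in> L \<and> (n + j, j) \<in> L"
    using ij t unfolding cyclic_def by auto
qed

text \<open>The order lists the \<open>u\<^sub>i\<close> with \<open>i \<in> S\<close>, then \<open>w\<^sub>i u\<^sub>i\<close> for each \<open>i \<notin> S\<close>, then the \<open>w\<^sub>i\<close> with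
  \<open>i \<in> S\<close>, each block by increasing \<open>i\<close>.\<close>

definition rank :: "nat \<Rightarrow> nat set \<Rightarrow> nat \<Rightarrow> nat" where
  "rank n S e = (if e \<le> n then (if e \<in> S then e else n + 2 * e + 1)
                 else (if e - n \<in> S then 4 * n + (e - n) else n + 2 * (e - n)))"

definition order_of_set :: "nat \<Rightarrow> nat set \<Rightarrow> (nat \<times> nat) set" where
  "order_of_set n S = {(e, f). e \<in> {1..2 * n} \<and> f \<in> {1..2 * n} \<and> rank n S e < rank n S f}"

lemma order_of_set_iff:
  "(e, f) \<in> order_of_set n S \<longleftrightarrow> e \<in> {1..2 * n} \<and> f \<in> {1..2 * n} \<and> rank n S e < rank n S f"
  by (simp add: order_of_set_def)

lemma rank_low: "i \<le> n \<Longrightarrow> rank n S i = (if i \<in> S then i else n + 2 * i + 1)"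
  by (simp add: rank_def)

lemma rank_high: "1 \<le> i \<Longrightarrow> rank n S (n + i) = (if i \<in> S then 4 * n + i else n + 2 * i)"
  by (simp add: rank_def)

lemma inj_on_rank: "inj_on (rank n S) {1..2 * n}"
proof
  fix e f assume e: "e \<in> {1..2 * n}" and f: "f \<in> {1..2 * n}" and eq: "rank n S e = rank n S f"
  have cases: "e \<le> n \<or> (\<exists>i. 1 \<le> i \<and> i \<le> n \<and> e = n + i)" if "e \<in> {1..2 * n}" for e
    using that by (cases "e \<le> n") (auto intro: exI[of _ "e - n"])
  show "e = f"
    using cases[OF e] cases[OF f] eq
    by (auto simp: rank_low rank_high split: if_splits) presburger+
qed

lemma lin_order_order_of_set: "lin_order (2 * n) (order_of_set n S)"
  unfolding lin_order_def
proof (intro conjI ballI impI)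
  show "trans (order_of_set n S)"
    unfolding trans_def order_of_set_def by auto
  show "((i, j) \<in> order_of_set n S) = ((j, i) \<notin> order_of_set n S)"
    if "i \<in> {1..2 * n}" "j \<in> {1..2 * n}" "i \<noteq> j" for i j
  proof -
    have "rank n S i \<noteq> rank n S j" using inj_onD[OF inj_on_rank[of n S]] that by blast
    then show ?thesis using that unfolding order_of_set_def by auto
  qed
qed (auto simp: order_of_set_def)

lemma face_order_order_of_set: "face_order n (order_of_set n S)"
  unfolding face_order_def
proof (intro allI impI)
  fix i j :: nat assume ij: "1 \<le> i" "i < j" "j \<le> n"
  then show "(i, n + j) \<in> order_of_set n S \<and> cyclic (order_of_set n S) i j (n + i)
      \<and> cyclic (order_of_set n S) j (n + i) (n + j)"
    unfolding cyclic_def order_of_set_iff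
    by (cases "i \<in> S"; cases "j \<in> S") (simp_all add: rank_low rank_high)
qed

lemma diagonal_order_of_set:
  assumes "S \<subseteq> {1..n}"
  shows "{i \<in> {1..n}. (i, n + i) \<in> order_of_set n S} = S"
  using assms by (auto simp: order_of_set_iff rank_low rank_high split: if_splits)

section \<open>The hyperplanes defining the face\<close>

definition dicycle_vec :: "nat \<Rightarrow> nat \<Rightarrow> nat \<Rightarrow> vect" where
  "dicycle_vec a b c = (\<lambda>k. unit_vec (a, b) k + unit_vec (b, c) k - unit_vec (a, c) k)"

lemma inner_on_char_vec_unit_vec:
  "p \<in> lop_idx m \<Longrightarrow> inner_on (lop_idx m) (unit_vec p) (char_vec m L) = (if p \<in> L then 1 else 0)"
  by (simp add: finite_lop_idx char_vec_def)

lemma inner_on_char_vec_dicycle_vec: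
  assumes L: "lin_order m L" and abc: "1 \<le> a" "a < b" "b < c" "c \<le> m"
  shows "inner_on (lop_idx m) (dicycle_vec a b c) (char_vec m L) \<le> 1"
    and "inner_on (lop_idx m) (dicycle_vec a b c) (char_vec m L) = 1 \<longleftrightarrow> cyclic L a b c"
proof -
  have val: "inner_on (lop_idx m) (dicycle_vec a b c) (char_vec m L)
      = (if (a, b) \<in> L then 1 else 0) + (if (b, c) \<in> L then 1 else 0) - (if (a, c) \<in> L then 1 else 0)"
    using abc by (simp add: dicycle_vec_def finite_lop_idx char_vec_def)
  have "(c, a) \<in> L \<longleftrightarrow> (a, c) \<notin> L" "(b, a) \<in> L \<longleftrightarrow> (a, b) \<notin> L" "(c, b) \<in> L \<longleftrightarrow> (b, c) \<notin> L"
    using abc lin_order_total[OF L, of c a] lin_order_total[OF L, of b a] lin_order_total[OF L, of c b]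
    by auto
  moreover note lin_order_trans[OF L]
  ultimately show "inner_on (lop_idx m) (dicycle_vec a b c) (char_vec m L) \<le> 1"
    and "inner_on (lop_idx m) (dicycle_vec a b c) (char_vec m L) = 1 \<longleftrightarrow> cyclic L a b c"
    unfolding val cyclic_def by (auto split: if_splits)
qed

text \<open>The trivial equation \<open>0 = 0\<close> keeps the family nonempty when \<open>n = 0\<close>.\<close>

definition face_hyperplanes :: "nat \<Rightarrow> (vect \<times> real) set" where
  "face_hyperplanes n = insert (\<lambda>_. 0, 0)
     ((\<lambda>(i, j). (unit_vec (i, n + j), 1)) ` lop_idx n
      \<union> (\<lambda>(i, j). (dicycle_vec i j (n + i), 1)) ` lop_idx n
      \<union> (\<lambda>(i, j). (dicycle_vec j (n + i) (n + j), 1)) ` lop_idx n)"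

lemma finite_face_hyperplanes: "finite (face_hyperplanes n)"
  by (simp add: face_hyperplanes_def finite_lop_idx)

lemma ball_face_hyperplanes:
  "(\<forall>(a, b)\<in>face_hyperplanes n. P a b) \<longleftrightarrow> P (\<lambda>_. 0) 0 \<and>
     (\<forall>i j. 1 \<le> i \<longrightarrow> i < j \<longrightarrow> j \<le> n \<longrightarrow>
        P (unit_vec (i, n + j)) 1 \<and> P (dicycle_vec i j (n + i)) 1 \<and> P (dicycle_vec j (n + i) (n + j)) 1)"
  unfolding face_hyperplanes_def by (simp add: ball_Un) (auto simp: lop_idx_def)

lemma char_vec_face_hyperplanes:
  assumes L: "lin_order (2 * n) L"
  shows "\<forall>(a, b)\<in>face_hyperplanes n. inner_on (lop_idx (2 * n)) a (char_vec (2 * n) L) \<le> b"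
    and "(\<forall>(a, b)\<in>face_hyperplanes n. inner_on (lop_idx (2 * n)) a (char_vec (2 * n) L) = b)
         \<longleftrightarrow> face_order n L"
proof -
  let ?v = "\<lambda>a. inner_on (lop_idx (2 * n)) a (char_vec (2 * n) L)"
  have unit: "?v (unit_vec (i, n + j)) = (if (i, n + j) \<in> L then 1 else 0)"
    and le1: "?v (dicycle_vec i j (n + i)) \<le> 1" "?v (dicycle_vec j (n + i) (n + j)) \<le> 1"
    and eq1: "?v (dicycle_vec i j (n + i)) = 1 \<longleftrightarrow> cyclic L i j (n + i)"
      "?v (dicycle_vec j (n + i) (n + j)) = 1 \<longleftrightarrow> cyclic L j (n + i) (n + j)"
    if "1 \<le> i" "i < j" "j \<le> n" for i j
    using that inner_on_char_vec_unit_vec[of "(i, n + j)" "2 * n" L]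
      inner_on_char_vec_dicycle_vec[OF L, of i j "n + i"]
      inner_on_char_vec_dicycle_vec[OF L, of j "n + i" "n + j"]
    by auto
  show "\<forall>(a, b)\<in>face_hyperplanes n. ?v a \<le> b"
    unfolding ball_face_hyperplanes using unit le1 by auto
  show "(\<forall>(a, b)\<in>face_hyperplanes n. ?v a = b) \<longleftrightarrow> face_order n L"
    unfolding ball_face_hyperplanes face_order_def using unit eq1 by auto
qed

section \<open>Embedding the boolean quadric polytope\<close>

definition bqp_vertex :: "nat \<Rightarrow> nat set \<Rightarrow> vect" where
  "bqp_vertex n S = (\<lambda>(i, j). if (i, j) \<in> bqp_idx n \<and> i \<in> S \<and> j \<in> S then 1 else 0)"

lemma bqp_vertices_eq: "bqp_vertices n = bqp_vertex n ` Pow {1..n}"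
proof
  show "bqp_vertex n ` Pow {1..n} \<subseteq> bqp_vertices n"
    unfolding bqp_vertices_def bqp_vertex_def by auto
  show "bqp_vertices n \<subseteq> bqp_vertex n ` Pow {1..n}"
  proof
    fix x assume x: "x \<in> bqp_vertices n"
    define S where "S = {i \<in> {1..n}. x (i, i) = 1}"
    have diag: "x (i, i) \<in> {0, 1}" if "1 \<le> i" "i \<le> n" for i
      using x that unfolding bqp_vertices_def by auto
    have "x (i, j) = bqp_vertex n S (i, j)" for i j
    proof (cases "(i, j) \<in> bqp_idx n")
      case False
      then show ?thesis using x unfolding bqp_vertices_def bqp_vertex_def by auto
    next
      case True
      then have "x (i, j) = x (i, i) * x (j, j)"
        using x unfolding bqp_vertices_def by (cases "i = j") (auto simp: diag)
      then show ?thesis using True diag[of i] diag[of j] unfolding bqp_vertex_def S_def by auto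
    qed
    then have "x = bqp_vertex n S" by auto
    then show "x \<in> bqp_vertex n ` Pow {1..n}" unfolding S_def by auto
  qed
qed

lemma finite_bqp_vertices: "finite (bqp_vertices n)"
  unfolding bqp_vertices_eq by simp

text \<open>At the vertex \<open>x\<close> of \<open>S\<close>, each coordinate is the indicator of the corresponding pair in
  the face order of \<open>S\<close>, written affinely in \<open>x\<close>: e.g. for \<open>j < i\<close>, \<open>w\<^sub>j\<close> precedes \<open>u\<^sub>i\<close> iff
  \<open>i, j \<notin> S\<close>, whence \<open>x\<^sub>i\<^sub>i + x\<^sub>j\<^sub>j - x\<^sub>j\<^sub>i\<close>.\<close>

definition bqp_embed :: "nat \<Rightarrow> vect \<Rightarrow> vect" where
  "bqp_embed n x = (\<lambda>(a, b).
     if 1 \<le> a \<and> a < b \<and> b \<le> n then x (a, b) - x (b, b) + 1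
     else if n < a \<and> a < b \<and> b \<le> 2 * n then x (a - n, b - n) - x (a - n, a - n) + 1
     else if 1 \<le> a \<and> a \<le> n \<and> n < b \<and> b \<le> 2 * n then
       (if a < b - n then 1 else if a = b - n then x (a, a)
        else x (a, a) + x (b - n, b - n) - x (b - n, a))
     else 0)"

lemma bqp_embed_affine: "\<exists>A c. bqp_embed n = affine_map (bqp_idx n) A c"
proof (intro exI ext)
  fix x :: vect and k :: "nat \<times> nat"
  obtain a b where k: "k = (a, b)" by fastforce
  let ?e = unit_vec
  define A :: "nat \<times> nat \<Rightarrow> vect" where "A = (\<lambda>(a, b).
     if 1 \<le> a \<and> a < b \<and> b \<le> n then (\<lambda>l. ?e (a, b) l - ?e (b, b) l)
     else if n < a \<and> a < b \<and> b \<le> 2 * n then (\<lambda>l. ?e (a - n, b - n) l - ?e (a - n, a - n) l)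
     else if 1 \<le> a \<and> a \<le> n \<and> n < b \<and> b \<le> 2 * n then
       (if a < b - n then (\<lambda>_. 0) else if a = b - n then ?e (a, a)
        else (\<lambda>l. ?e (a, a) l + ?e (b - n, b - n) l - ?e (b - n, a) l))
     else (\<lambda>_. 0))"
  define c :: vect where "c = (\<lambda>(a, b).
     if 1 \<le> a \<and> a < b \<and> b \<le> n then 1
     else if n < a \<and> a < b \<and> b \<le> 2 * n then 1
     else if 1 \<le> a \<and> a \<le> n \<and> n < b \<and> b \<le> 2 * n then (if a < b - n then 1 else 0)
     else 0)"
  have fin: "finite (bqp_idx n)" by (rule finite_bqp_idx)
  consider "1 \<le> a \<and> a < b \<and> b \<le> n" | (ww) "n < a \<and> a < b \<and> b \<le> 2 * n"
    | "1 \<le> a \<and> a \<le> n \<and> n < b \<and> b \<le> 2 * n" "a < b - n"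
    | "1 \<le> a \<and> a \<le> n \<and> n < b \<and> b \<le> 2 * n" "a = b - n"
    | "1 \<le> a \<and> a \<le> n \<and> n < b \<and> b \<le> 2 * n" "b - n < a"
    | (none) "\<not> (1 \<le> a \<and> a < b \<and> b \<le> n)" "\<not> (n < a \<and> a < b \<and> b \<le> 2 * n)"
      "\<not> (1 \<le> a \<and> a \<le> n \<and> n < b \<and> b \<le> 2 * n)"
    by linarith
  then show "bqp_embed n x k = affine_map (bqp_idx n) A c x k"
  proof cases
    case ww
    then have "(a - n, b - n) \<in> bqp_idx n" "(a - n, a - n) \<in> bqp_idx n" by auto
    with ww show ?thesis by (simp add: k bqp_embed_def affine_map_def A_def c_def fin)
  next
    case none
    then show ?thesis
      unfolding k bqp_embed_def affine_map_def A_def c_def case_prod_conv by (simp only: if_not_P) simp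
  qed (auto simp: k bqp_embed_def affine_map_def A_def c_def fin)
qed

lemma char_vec_face_order:
  assumes L: "lin_order (2 * n) L" "face_order n L"
  shows "char_vec (2 * n) L = bqp_embed n (bqp_vertex n {i \<in> {1..n}. (i, n + i) \<in> L})"
proof -
  define S where "S = {i \<in> {1..n}. (i, n + i) \<in> L}"
  have inS: "i \<in> S \<longleftrightarrow> (i, n + i) \<in> L" and notS: "i \<notin> S \<longleftrightarrow> (n + i, i) \<in> L"
    if "1 \<le> i" "i \<le> n" for i
    using that lin_order_total[OF L(1), of i "n + i"] unfolding S_def by auto
  have x: "bqp_vertex n S (i, j) = (if i \<in> S \<and> j \<in> S then 1 else 0)"
    if "1 \<le> i" "i \<le> j" "j \<le> n" for i j
    using that by (simp add: bqp_vertex_def)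
  have "char_vec (2 * n) L (a, b) = bqp_embed n (bqp_vertex n S) (a, b)" for a b
  proof (cases "1 \<le> a \<and> a < b \<and> b \<le> 2 * n")
    case False
    then show ?thesis by (auto simp: char_vec_apply bqp_embed_def)
  next
    case True
    consider (uu) "b \<le> n" | (ww) "n < a" | (uw) "a \<le> n" "n < b" by linarith
    then show ?thesis
    proof cases
      case uu
      then show ?thesis
        using True face_order_pairs(1)[OF L, of a b] inS[of a] notS[of b]
        by (auto simp: char_vec_apply bqp_embed_def x)
    next
      case ww
      obtain i j where ij: "a = n + i" "b = n + j"
        using ww True by (intro that[of "a - n" "b - n"]) auto
      then show ?thesis
        using True ww face_order_pairs(2)[OF L, of i j] notS[of i] inS[of j]
        by (auto simp: char_vec_apply bqp_embed_def x)
    next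
      case uw
      obtain j where j: "b = n + j" using uw by (intro that[of "b - n"]) auto
      consider (lt) "a < j" | (eq) "a = j" | (gt) "j < a" by linarith
      then show ?thesis
      proof cases
        case lt
        then show ?thesis
          using True uw j L(2) by (auto simp: char_vec_apply bqp_embed_def face_order_def)
      next
        case eq
        then show ?thesis
          using True uw j inS[of a] by (auto simp: char_vec_apply bqp_embed_def x)
      next
        case gt
        then show ?thesis
          using True uw j face_order_pairs(3)[OF L, of j a] notS[of j] notS[of a]
            lin_order_total[OF L(1), of a "n + j"]
          by (auto simp: char_vec_apply bqp_embed_def x)
      qed
    qed
  qed
  then show ?thesis unfolding S_def by auto
qed

lemma char_vec_order_of_set:
  "S \<subseteq> {1..n} \<Longrightarrow> char_vec (2 * n) (order_of_set n S) = bqp_embed n (bqp_vertex n S)"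
  using char_vec_face_order[OF lin_order_order_of_set face_order_order_of_set, of n S]
  by (simp only: diagonal_order_of_set)

lemma face_vertices_eq:
  "{w \<in> lop_vertices (2 * n). \<forall>(a, b)\<in>face_hyperplanes n. inner_on (lop_idx (2 * n)) a w = b}
     = bqp_embed n ` bqp_vertices n"
proof (intro equalityI subsetI)
  fix w assume "w \<in> {w \<in> lop_vertices (2 * n). \<forall>(a, b)\<in>face_hyperplanes n. inner_on (lop_idx (2 * n)) a w = b}"
  then obtain L where L: "lin_order (2 * n) L" "w = char_vec (2 * n) L"
    and tight: "\<forall>(a, b)\<in>face_hyperplanes n. inner_on (lop_idx (2 * n)) a (char_vec (2 * n) L) = b"
    unfolding lop_vertices_def by auto
  have "face_order n L" using tight char_vec_face_hyperplanes(2)[OF L(1)] by blast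
  then have "w = bqp_embed n (bqp_vertex n {i \<in> {1..n}. (i, n + i) \<in> L})"
    using char_vec_face_order[OF L(1)] L(2) by simp
  moreover have "{i \<in> {1..n}. (i, n + i) \<in> L} \<in> Pow {1..n}" by blast
  ultimately show "w \<in> bqp_embed n ` bqp_vertices n"
    unfolding bqp_vertices_eq by blast
next
  fix w assume "w \<in> bqp_embed n ` bqp_vertices n"
  then obtain S where S: "S \<subseteq> {1..n}" "w = char_vec (2 * n) (order_of_set n S)"
    unfolding bqp_vertices_eq by (auto simp: char_vec_order_of_set)
  then show "w \<in> {w \<in> lop_vertices (2 * n). \<forall>(a, b)\<in>face_hyperplanes n. inner_on (lop_idx (2 * n)) a w = b}"
    using lin_order_order_of_set face_order_order_of_set
      char_vec_face_hyperplanes(2)[OF lin_order_order_of_set]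
    unfolding lop_vertices_def by auto
qed

lemma inj_on_bqp_embed: "inj_on (bqp_embed n) {x. \<forall>k. k \<notin> bqp_idx n \<longrightarrow> x k = 0}"
proof
  fix x y assume x: "x \<in> {x. \<forall>k. k \<notin> bqp_idx n \<longrightarrow> x k = 0}" and y: "y \<in> {x. \<forall>k. k \<notin> bqp_idx n \<longrightarrow> x k = 0}"
    and eq: "bqp_embed n x = bqp_embed n y"
  have diag: "bqp_embed n z (i, n + i) = z (i, i)" if "1 \<le> i" "i \<le> n" for z i
    using that by (simp add: bqp_embed_def)
  have upper: "bqp_embed n z (i, j) = z (i, j) - z (j, j) + 1" if "1 \<le> i" "i < j" "j \<le> n" for z i j
    using that by (simp add: bqp_embed_def)
  have "x (i, j) = y (i, j)" for i j
  proof (cases "(i, j) \<in> bqp_idx n")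
    case True
    then have ij: "1 \<le> i" "i \<le> j" "j \<le> n" by auto
    then have jj: "x (j, j) = y (j, j)" using diag[of j x] diag[of j y] eq by simp
    show ?thesis
    proof (cases "i = j")
      case False
      then show ?thesis using ij jj upper[of i j x] upper[of i j y] eq by simp
    qed (use jj in simp)
  qed (use x y in auto)
  then show "x = y" by auto
qed

definition lop_face :: "nat \<Rightarrow> vect set" where
  "lop_face n = LOP (2 * n) \<inter> (\<Inter>(a, b)\<in>face_hyperplanes n. hyperplane_on (lop_idx (2 * n)) a b)"

lemma face_hyperplanes_valid:
  "\<forall>w\<in>lop_vertices (2 * n). \<forall>(a, b)\<in>face_hyperplanes n. inner_on (lop_idx (2 * n)) a w \<le> b"
  using char_vec_face_hyperplanes(1) unfolding lop_vertices_def by blast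

lemma is_face_on_lop_face: "is_face_on (lop_idx (2 * n)) (LOP (2 * n)) (lop_face n)"
proof -
  have "bqp_embed n (bqp_vertex n {})
      \<in> {w \<in> lop_vertices (2 * n). \<forall>(a, b)\<in>face_hyperplanes n. inner_on (lop_idx (2 * n)) a w = b}"
    unfolding face_vertices_eq bqp_vertices_eq by blast
  then have w0: "bqp_embed n (bqp_vertex n {}) \<in> lop_vertices (2 * n)"
    "\<forall>(a, b)\<in>face_hyperplanes n. inner_on (lop_idx (2 * n)) a (bqp_embed n (bqp_vertex n {})) = b"
    by simp_all
  have "face_hyperplanes n \<noteq> {}" by (simp add: face_hyperplanes_def)
  then show ?thesis
    unfolding lop_face_def LOP_def
    by (rule is_face_on_Int_hyperplanes[OF finite_lop_vertices finite_face_hyperplanes _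
          face_hyperplanes_valid w0])
qed

lemma inj_on_bqp_embed_BQP: "inj_on (bqp_embed n) (BQP n)"
  by (rule inj_on_subset[OF inj_on_bqp_embed])
    (auto simp: BQP_def bqp_vertices_def intro: conv_hull_fin_coord_zero)

lemma bqp_embed_BQP: "bqp_embed n ` BQP n = lop_face n"
proof -
  obtain A c where affine: "bqp_embed n = affine_map (bqp_idx n) A c"
    using bqp_embed_affine by blast
  have "inj_on (bqp_embed n) (bqp_vertices n)"
    using inj_on_bqp_embed_BQP unfolding BQP_def
    by (rule inj_on_subset) (auto intro: vertex_in_conv_hull_fin finite_bqp_vertices)
  then have "bqp_embed n ` BQP n = conv_hull_fin (bqp_embed n ` bqp_vertices n)"
    unfolding BQP_def affine by (rule affine_map_conv_hull_fin[OF finite_bqp_vertices])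
  also have "\<dots> = conv_hull_fin
      {w \<in> lop_vertices (2 * n). \<forall>(a, b)\<in>face_hyperplanes n. inner_on (lop_idx (2 * n)) a w = b}"
    by (simp only: face_vertices_eq)
  also have "\<dots> = lop_face n"
    unfolding lop_face_def LOP_def
    by (rule conv_hull_fin_Int_hyperplanes[OF finite_lop_vertices face_hyperplanes_valid, symmetric])
  finally show ?thesis .
qed

theorem theorem1:
  fixes n :: nat
  shows "\<exists>F. is_face_on (lop_idx (2 * n)) (LOP (2 * n)) F \<and> aff_equiv_on (bqp_idx n) (BQP n) F"
proof -
  obtain A c where affine: "bqp_embed n = affine_map (bqp_idx n) A c"
    using bqp_embed_affine by blast
  have "bij_betw (bqp_embed n) (BQP n) (lop_face n)"
    using inj_on_bqp_embed_BQP bqp_embed_BQP by (simp add: bij_betw_def)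
  then have "aff_equiv_on (bqp_idx n) (BQP n) (lop_face n)"
    unfolding aff_equiv_on_def affine affine_map_def inner_on_def by blast
  with is_face_on_lop_face show ?thesis by blast
qed

end
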